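(* Let $A\in\mathbb{R}^{m\times n}$ with $\operatorname{rank}(A)=m$, $b\in\mathbb{R}^m$, and suppose $\mathcal{F}=\{x\in\mathbb{R}^n: Ax=b,\ x\ge 0\}$ is nonempty with no strictly positive point. Let $y\in\mathbb{R}^m$ satisfy $0\ne z:=A^Ty\ge 0$ and $\langle b,y\rangle=0$, and let $V\in\mathbb{R}^{n\times(n-s_z)}$ be the matrix whose columns are the unit vectors $e_i$ for the indices $i$ with $z_i=0$ (in increasing order), where $s_z=|\{i:z_i>0\}|$. Let $\mathcal{I}_0=\{i\in\{1,\dots,n\}: x_i=0 \text{ for all } x\in\mathcal{F}\}$. Then for every basic feasible solution $\bar x$ of $\mathcal{F}$ with basis $\mathcal{B}$: (1) the degree of degeneracy of $\bar x$ is at least $m-\operatorname{rank}(AV)$; (2) at least $m-\operatorname{rank}(AV)$ of the basic indices in $\mathcal{B}$ belong to $\mathcal{I}_0$.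
   Context: Given $\mathcal{B}\subset\{1,\dots,n\}$ with $|\mathcal{B}|=m$, a point $x\in\mathcal{F}$ is a basic feasible solution (with basis $\mathcal{B}$) if $A(:,\mathcal{B})$ (columns of $A$ indexed by $\mathcal{B}$) is nonsingular and $x_i=0$ for all $i\notin\mathcal{B}$. The degree of degeneracy of a basic feasible solution $\bar x$ with basis $\mathcal{B}$ is the number of indices $i\in\mathcal{B}$ with $\bar x_i=0$. Such a $y$ exists whenever strict feasibility fails, and $\mathcal{F}=\{Vv: AVv=b,\ v\ge 0\}$. *)

theory Defs
  imports "Jordan_Normal_Form.DL_Rank" "Jordan_Normal_Form.DL_Submatrix"
begin

(* Indices are 0-based: rows 0..<m, columns 0..<n. *)

definition feasible_set :: "real mat \<Rightarrow> real vec \<Rightarrow> real vec set" where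
  "feasible_set A b = {x \<in> carrier_vec (dim_col A). A *\<^sub>v x = b \<and> (\<forall>i<dim_col A. x $ i \<ge> 0)}"

definition mrank :: "real mat \<Rightarrow> nat" where
  "mrank M = vec_space.rank (dim_row M) M"

definition is_bfs :: "real mat \<Rightarrow> real vec \<Rightarrow> real vec \<Rightarrow> nat set \<Rightarrow> bool" where
  "is_bfs A b x B \<longleftrightarrow> B \<subseteq> {0..<dim_col A} \<and> card B = dim_row A \<and>
     det (submatrix A UNIV B) \<noteq> 0 \<and> x \<in> feasible_set A b \<and>
     (\<forall>i<dim_col A. i \<notin> B \<longrightarrow> x $ i = 0)"

definition degeneracy_degree :: "real vec \<Rightarrow> nat set \<Rightarrow> nat" where
  "degeneracy_degree x B = card {i \<in> B. x $ i = 0}"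

definition implicit_zeros :: "real mat \<Rightarrow> real vec \<Rightarrow> nat set" where
  "implicit_zeros A b = {i. i < dim_col A \<and> (\<forall>x \<in> feasible_set A b. x $ i = 0)}"

definition Vmat :: "nat \<Rightarrow> real vec \<Rightarrow> real mat" where
  "Vmat n z = (let Z = sorted_list_of_set {i. i < n \<and> z $ i = 0} in
     mat n (n - card {i. i < n \<and> z $ i > 0}) (\<lambda>(i, j). if i = Z ! j then 1 else 0))"

end

theory Submission
  imports Defs
begin

text \<open>The certificate \<open>z = A\<^sup>T y \<ge> 0\<close> with \<open>\<langle>b, y\<rangle> = 0\<close> gives \<open>\<langle>z, x\<rangle> = \<langle>y, A x\<rangle> = 0\<close> on
  the feasible set, so every index in the support of \<open>z\<close> is an implicit zero. The \<open>m\<close>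
  basic columns of \<open>A\<close> are linearly independent; those outside the support of \<open>z\<close> are
  columns of \<open>A V\<close>, so at most \<open>rank (A V)\<close> of them lie outside it. Hence at least
  \<open>m - rank (A V)\<close> basic indices are implicit zeros, and these are degenerate.\<close>

lemma support_subset_implicit_zeros:
  fixes A :: "real mat"
  assumes A: "A \<in> carrier_mat m n" and b: "b \<in> carrier_vec m" and y: "y \<in> carrier_vec m"
    and z_def: "z = transpose_mat A *\<^sub>v y"
    and z_nonneg: "\<forall>i<n. z $ i \<ge> 0" and by0: "b \<bullet> y = 0"
  shows "{i. i < n \<and> z $ i > 0} \<subseteq> implicit_zeros A b"
proof
  fix i assume i: "i \<in> {i. i < n \<and> z $ i > 0}"
  have "w $ i = 0" if w: "w \<in> feasible_set A b" for w
  proof -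
    have wc: "w \<in> carrier_vec n" and Aw: "A *\<^sub>v w = b" and w_nonneg: "\<forall>k<n. w $ k \<ge> 0"
      using w A unfolding feasible_set_def by auto
    have "z \<bullet> w = y \<bullet> (A *\<^sub>v w)"
      unfolding z_def using transpose_vec_mult_scalar[OF A wc y] .
    also have "\<dots> = 0" using Aw by0 b y by (simp add: comm_scalar_prod)
    finally have "(\<Sum>k\<in>{0..<n}. z $ k * w $ k) = 0"
      using wc by (simp add: scalar_prod_def)
    moreover have "\<forall>k\<in>{0..<n}. z $ k * w $ k \<ge> 0" using w_nonneg z_nonneg by simp
    ultimately have "\<forall>k\<in>{0..<n}. z $ k * w $ k = 0"
      using sum_nonneg_eq_0_iff[of "{0..<n}" "\<lambda>k. z $ k * w $ k"] by auto
    thus ?thesis using i by force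
  qed
  thus "i \<in> implicit_zeros A b" using i A unfolding implicit_zeros_def by auto
qed

lemma card_implicit_zeros_le_degeneracy_degree:
  assumes "x \<in> feasible_set A b" and "finite B"
  shows "card (B \<inter> implicit_zeros A b) \<le> degeneracy_degree x B"
  unfolding degeneracy_degree_def
  using assms by (intro card_mono) (auto simp: implicit_zeros_def)

lemma Vmat_carrier:
  assumes "\<forall>i<n. z $ i \<ge> 0"
  shows "Vmat n z \<in> carrier_mat n (card {i. i < n \<and> z $ i = 0})"
proof -
  have "{0..<n} = {i. i < n \<and> z $ i = 0} \<union> {i. i < n \<and> z $ i > 0}"
    using assms by force
  hence "card {0..<n} = card {i. i < n \<and> z $ i = 0} + card {i. i < n \<and> z $ i > 0}"
    by (simp add: card_Un_disjoint disjoint_iff)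
  hence "n - card {i. i < n \<and> z $ i > 0} = card {i. i < n \<and> z $ i = 0}" by simp
  thus ?thesis unfolding Vmat_def Let_def by (simp only: mat_carrier)
qed

lemma index_Vmat:
  assumes "\<forall>i<n. z $ i \<ge> 0" and "i < n" and "j < card {i. i < n \<and> z $ i = 0}"
  shows "Vmat n z $$ (i, j) = (if i = sorted_list_of_set {i. i < n \<and> z $ i = 0} ! j then 1 else 0)"
proof -
  have "dim_col (Vmat n z) = n - card {i. i < n \<and> z $ i > 0}"
    unfolding Vmat_def Let_def by simp
  hence "j < n - card {i. i < n \<and> z $ i > 0}"
    using Vmat_carrier[OF assms(1)] assms(3) by simp
  thus ?thesis using assms(2) unfolding Vmat_def Let_def by simp
qed

lemma col_mult_Vmat:
  fixes A :: "real mat"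
  assumes A: "A \<in> carrier_mat m n" and z_nonneg: "\<forall>i<n. z $ i \<ge> 0"
    and j: "j < card {i. i < n \<and> z $ i = 0}"
  shows "col (A * Vmat n z) j = col A (sorted_list_of_set {i. i < n \<and> z $ i = 0} ! j)"
    (is "_ = col A ?i")
proof -
  have V: "Vmat n z \<in> carrier_mat n (card {i. i < n \<and> z $ i = 0})"
    using Vmat_carrier[OF z_nonneg] .
  have "?i \<in> set (sorted_list_of_set {i. i < n \<and> z $ i = 0})"
    using j by (intro nth_mem) simp
  hence i: "?i < n" by simp
  show ?thesis
  proof (rule eq_vecI)
    fix r assume "r < dim_vec (col A ?i)"
    hence r: "r < m" using A by simp
    have "col (A * Vmat n z) j $ r = (\<Sum>k = 0..<n. A $$ (r, k) * (if k = ?i then 1 else 0))"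
      using A V j r by (simp add: scalar_prod_def index_Vmat[OF z_nonneg])
    also have "\<dots> = col A ?i $ r" using A r i by (simp add: if_distrib cong: if_cong)
    finally show "col (A * Vmat n z) j $ r = col A ?i $ r" .
  qed (use A V j in simp)
qed

lemma col_in_cols_mult_Vmat:
  fixes A :: "real mat"
  assumes A: "A \<in> carrier_mat m n" and z_nonneg: "\<forall>i<n. z $ i \<ge> 0"
    and i: "i < n" and zi: "z $ i = 0"
  shows "col A i \<in> set (cols (A * Vmat n z))"
proof -
  have "i \<in> set (sorted_list_of_set {i. i < n \<and> z $ i = 0})" using i zi by simp
  then obtain j where j: "j < card {i. i < n \<and> z $ i = 0}"
    and ij: "sorted_list_of_set {i. i < n \<and> z $ i = 0} ! j = i"
    unfolding in_set_conv_nth by auto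
  have "j < length (cols (A * Vmat n z))" using A Vmat_carrier[OF z_nonneg] j by simp
  moreover have "cols (A * Vmat n z) ! j = col A i"
    using calculation col_mult_Vmat[OF A z_nonneg j] ij by simp
  ultimately show ?thesis using nth_mem by metis
qed

lemma col_submatrix_UNIV:
  assumes J: "J \<subseteq> {0..<dim_col A}" and j: "j < card J"
  shows "col (submatrix A UNIV J) j = col A (pick J j)"
proof (rule eq_vecI)
  have J_eq: "{j. j < dim_col A \<and> j \<in> J} = J" using J by auto
  have pick: "pick J j < dim_col A" using pick_in_set_le[OF j] J by auto
  fix i assume "i < dim_vec (col A (pick J j))"
  thus "col (submatrix A UNIV J) j $ i = col A (pick J j) $ i"
    using j pick submatrix_index[of i A UNIV j J] by (simp add: dim_submatrix J_eq pick_UNIV)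
qed (simp add: dim_submatrix)

lemma set_cols_submatrix_UNIV:
  assumes "J \<subseteq> {0..<dim_col A}"
  shows "set (cols (submatrix A UNIV J)) \<subseteq> col A ` J"
proof
  have J: "{j. j < dim_col A \<and> j \<in> J} = J" using assms by auto
  fix v assume "v \<in> set (cols (submatrix A UNIV J))"
  then obtain k where k: "k < card J" and v: "v = col (submatrix A UNIV J) k"
    by (auto simp: in_set_conv_nth dim_submatrix J)
  have "v = col A (pick J k)" using col_submatrix_UNIV[OF assms k] v by simp
  thus "v \<in> col A ` J" using pick_in_set_le[OF k] by blast
qed

lemma
  fixes C :: "'a :: field mat"
  assumes C: "C \<in> carrier_mat m m" and det: "det C \<noteq> 0"
  shows card_set_cols_det_nonzero: "card (set (cols C)) = m"
    and lin_indpt_cols_det_nonzero: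
      "\<not> module.lin_dep class_ring (module_vec TYPE('a) m) (set (cols C))"
proof -
  have rank: "vec_space.rank m C = m" using vec_space.low_rank_det_zero[OF C det] .
  have distinct: "distinct (cols C)"
    using vec_space.non_distinct_low_rank[OF C] rank by fastforce
  show "card (set (cols C)) = m" using distinct C by (simp add: distinct_card)
  show "\<not> module.lin_dep class_ring (module_vec TYPE('a) m) (set (cols C))"
    using vec_space.full_rank_lin_indpt[OF C rank distinct] .
qed

lemma rank_deficiency_le_card_basis_inter:
  fixes A M :: "'a :: field mat"
  assumes A: "A \<in> carrier_mat m n" and B: "B \<subseteq> {0..<n}" "card B = m"
    and det: "det (submatrix A UNIV B) \<noteq> 0"
    and M: "M \<in> carrier_mat m k"
    and cols_M: "\<forall>j \<in> B - S. col A j \<in> set (cols M)"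
  shows "m - vec_space.rank m M \<le> card (B \<inter> S)"
proof -
  define C where "C = submatrix A UNIV B"
  have "{j. j < n \<and> j \<in> B} = B" using B by auto
  hence "dim_col C = m" using A B(2) by (simp only: C_def dim_submatrix carrier_matD)
  moreover have "dim_row C = m" using A by (simp add: C_def dim_submatrix)
  ultimately have C: "C \<in> carrier_mat m m" by blast
  have cols_C: "set (cols C) \<subseteq> col A ` B"
    unfolding C_def using set_cols_submatrix_UNIV B(1) A by (metis carrier_matD(2))
  define U1 where "U1 = set (cols C) \<inter> col A ` (B - S)"
  define U2 where "U2 = set (cols C) \<inter> col A ` (B \<inter> S)"
  have "set (cols C) = U1 \<union> U2" using cols_C unfolding U1_def U2_def by blast
  hence "m \<le> card U1 + card U2"
    using card_set_cols_det_nonzero[OF C det[folded C_def]] card_Un_le by metis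
  moreover have "card U2 \<le> card (B \<inter> S)"
  proof -
    have "finite B" using B(1) finite_subset by blast
    hence "card U2 \<le> card (col A ` (B \<inter> S))" unfolding U2_def by (intro card_mono) auto
    also have "\<dots> \<le> card (B \<inter> S)" using \<open>finite B\<close> by (intro card_image_le) simp
    finally show ?thesis .
  qed
  moreover have "card U1 \<le> vec_space.rank m M"
  proof (rule vec_space.rank_ge_card_indpt[OF M])
    show "U1 \<subseteq> set (cols M)" using cols_M unfolding U1_def by blast
    show "\<not> module.lin_dep class_ring (module_vec TYPE('a) m) U1"
      using module.subset_li_is_li[OF vec_module lin_indpt_cols_det_nonzero[OF C det[folded C_def]]]
      unfolding U1_def by blast
  qed
  ultimately show ?thesis by linarith
qed

theorem mainTheorem7:
  fixes A :: "real mat" and b y z :: "real vec" and m n :: nat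
  assumes A: "A \<in> carrier_mat m n"
    and rankA: "mrank A = m"
    and b: "b \<in> carrier_vec m"
    and nonempty: "feasible_set A b \<noteq> {}"
    and no_strict: "\<not> (\<exists>x \<in> feasible_set A b. \<forall>i<n. x $ i > 0)"
    and y: "y \<in> carrier_vec m"
    and z_def: "z = transpose_mat A *\<^sub>v y"
    and z_nz: "z \<noteq> 0\<^sub>v n"
    and z_nonneg: "\<forall>i<n. z $ i \<ge> 0"
    and by0: "b \<bullet> y = 0"
  shows "\<forall>x B. is_bfs A b x B \<longrightarrow>
           m - mrank (A * Vmat n z) \<le> degeneracy_degree x B \<and>
           m - mrank (A * Vmat n z) \<le> card (B \<inter> implicit_zeros A b)"
proof (intro allI impI)
  fix x B assume "is_bfs A b x B"
  hence B: "B \<subseteq> {0..<n}" "card B = m" and det: "det (submatrix A UNIV B) \<noteq> 0"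
    and x: "x \<in> feasible_set A b"
    using A unfolding is_bfs_def by auto
  have "finite B" using B(1) finite_subset by blast
  define P where "P = {i. i < n \<and> z $ i > 0}"
  have cols_AV: "\<forall>j \<in> B - P. col A j \<in> set (cols (A * Vmat n z))"
    using B(1) z_nonneg col_in_cols_mult_Vmat[OF A z_nonneg] unfolding P_def by force
  have AV: "A * Vmat n z \<in> carrier_mat m (card {i. i < n \<and> z $ i = 0})"
    using A Vmat_carrier[OF z_nonneg] by simp
  have "m - vec_space.rank m (A * Vmat n z) \<le> card (B \<inter> P)"
    using rank_deficiency_le_card_basis_inter[OF A B det AV cols_AV] .
  hence "m - mrank (A * Vmat n z) \<le> card (B \<inter> P)"
    using A unfolding mrank_def by simp
  also have "\<dots> \<le> card (B \<inter> implicit_zeros A b)"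
    using support_subset_implicit_zeros[OF A b y z_def z_nonneg by0] \<open>finite B\<close>
    unfolding P_def by (intro card_mono) auto
  finally show "m - mrank (A * Vmat n z) \<le> degeneracy_degree x B \<and>
      m - mrank (A * Vmat n z) \<le> card (B \<inter> implicit_zeros A b)"
    using card_implicit_zeros_le_degeneracy_degree[OF x \<open>finite B\<close>] by simp
qed

end
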